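(* Let $\mathbf{y}$ be observed data with summary statistic vector $s(\mathbf{y})\in\mathbb{R}^\kappa$, and let $(\theta^i,\mathbf{x}^{i*})$, $i=1,\dots,N$, be parameter samples paired with simulated pseudo-data having summary statistics $s(\mathbf{x}^{i*})\in\mathbb{R}^\kappa$. For a weight vector $\mathbf{w}\in E\subset\mathbb{R}^\kappa$, define the weighted distance $d_{\mathbf{w}}(s(\mathbf{x}),s(\mathbf{y}))=\sum_{i=1}^\kappa w_i^2(s_i(\mathbf{x})-s_i(\mathbf{y}))^2$, and let $Y^{(\mathbf{w})}_{1:n}$ be the parameter samples $\theta^i$ corresponding to the $n=M=\lfloor\alpha N\rfloor$ pseudo-data sets closest to $\mathbf{y}$ under $d_{\mathbf{w}}$. Let $X_{1:n}$ be a fixed sample (from the prior). Then $L(\mathbf{w})=\hat{D}_h(X_{1:n}\|Y^{(\mathbf{w})}_{1:n})$ is piecewise constant with respect to $\mathbf{w}\in E$, with finitely many discontinuities.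
   Context: For samples $X_{1:n},Y_{1:n}$ in $\mathbb{R}^d$ and an integer $k\ge 2$, let $\rho_k(i)$ be the Euclidean distance from $X_i$ to its $k$th nearest neighbour in $X_{1:n}$ (excluding itself) and $\nu_k(i)$ the distance from $X_i$ to its $k$th nearest neighbour in $Y_{1:n}$. The estimator is $\hat D_{\alpha'}(X_{1:n}\|Y_{1:n})=\frac1n\sum_{i=1}^n\left(\frac{(n-1)\rho_k(i)}{n\nu_k(i)}\right)^{1-\alpha'}B_{k,\alpha'}$ with $B_{k,\alpha'}=\frac{\Gamma(k)^2}{\Gamma(k-\alpha'+1)\Gamma(k+\alpha'-1)}$, and $\hat D_h=1-\hat D_{1/2}$. Here $\alpha\in(0,1)$ is the ABC acceptance proportion. *)

theory Defs
  imports "HOL-Analysis.Analysis"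
begin

text \<open>Distance from p to its k-th nearest neighbour among the points of the list Z
  (k >= 1; the k-th smallest of the distances, counted with multiplicity).\<close>
definition kth_nn_dist :: "('a::metric_space) list \<Rightarrow> 'a \<Rightarrow> nat \<Rightarrow> real" where
  "kth_nn_dist Z p k = sort (map (\<lambda>z. dist p z) Z) ! (k - 1)"

definition rho_k :: "(nat \<Rightarrow> 'a::metric_space) \<Rightarrow> nat \<Rightarrow> nat \<Rightarrow> nat \<Rightarrow> real" where
  "rho_k X n k i = kth_nn_dist (map X (filter (\<lambda>j. j \<noteq> i) [0..<n])) (X i) k"

definition nu_k :: "(nat \<Rightarrow> 'a::metric_space) \<Rightarrow> (nat \<Rightarrow> 'a) \<Rightarrow> nat \<Rightarrow> nat \<Rightarrow> nat \<Rightarrow> real" where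
  "nu_k X Y n k i = kth_nn_dist (map Y [0..<n]) (X i) k"

definition B_const :: "nat \<Rightarrow> real \<Rightarrow> real" where
  "B_const k a = Gamma (real k) ^ 2 / (Gamma (real k - a + 1) * Gamma (real k + a - 1))"

definition D_alpha_hat :: "(nat \<Rightarrow> 'a::metric_space) \<Rightarrow> (nat \<Rightarrow> 'a) \<Rightarrow> nat \<Rightarrow> nat \<Rightarrow> real \<Rightarrow> real" where
  "D_alpha_hat X Y n k a =
     (1 / real n) * (\<Sum>i<n. ((real n - 1) * rho_k X n k i / (real n * nu_k X Y n k i)) powr (1 - a)
                            * B_const k a)"

definition D_h_hat :: "(nat \<Rightarrow> 'a::metric_space) \<Rightarrow> (nat \<Rightarrow> 'a) \<Rightarrow> nat \<Rightarrow> nat \<Rightarrow> real" where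
  "D_h_hat X Y n k = 1 - D_alpha_hat X Y n k (1/2)"

definition wdist :: "real^'k \<Rightarrow> real^'k \<Rightarrow> real^'k \<Rightarrow> real" where
  "wdist w a b = (\<Sum>i\<in>UNIV. (w $ i)^2 * (a $ i - b $ i)^2)"

text \<open>Indices (among 0..N-1) of the n pseudo-data sets closest to the observed summary sy under d_w;
  ties broken by index (stable sort).\<close>
definition abc_selected :: "real^'k \<Rightarrow> (nat \<Rightarrow> real^'k) \<Rightarrow> real^'k \<Rightarrow> nat \<Rightarrow> nat \<Rightarrow> nat list" where
  "abc_selected w sx sy N n = take n (sort_key (\<lambda>i. wdist w (sx i) sy) [0..<N])"

definition Y_w :: "real^'k \<Rightarrow> (nat \<Rightarrow> 'a) \<Rightarrow> (nat \<Rightarrow> real^'k) \<Rightarrow> real^'k \<Rightarrow> nat \<Rightarrow> nat \<Rightarrow> nat \<Rightarrow> 'a" where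
  "Y_w w theta sx sy N n j = theta (abc_selected w sx sy N n ! j)"

definition abc_loss :: "(nat \<Rightarrow> 'a::metric_space) \<Rightarrow> (nat \<Rightarrow> 'a) \<Rightarrow> (nat \<Rightarrow> real^'k) \<Rightarrow> real^'k
    \<Rightarrow> nat \<Rightarrow> nat \<Rightarrow> nat \<Rightarrow> real^'k \<Rightarrow> real" where
  "abc_loss X theta sx sy N n k w = D_h_hat X (Y_w w theta sx sy N n) n k"

end

theory Submission
  imports Defs
begin

text \<open>The accepted set depends on the weights only through the order of the weighted
  distances of the N pseudo-data sets to the observation. The difference of two such distances
  is a linear form in the squared weights, so off the finitely many hyperplanes where one of
  these forms vanishes the order, hence the accepted set, hence the loss, is locally constant;
  and since there are only finitely many candidate accepted sets the loss takes finitely many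
  values.\<close>

lemma insort_key_cong:
  assumes "\<forall>y\<in>set xs. (f x \<le> f y) = (g x \<le> g y)"
  shows "insort_key f x xs = insort_key g x xs"
  using assms by (induction xs) auto

lemma sort_key_cong:
  assumes "\<forall>x\<in>set xs. \<forall>y\<in>set xs. (f x \<le> f y) = (g x \<le> g y)"
  shows "sort_key f xs = sort_key g xs"
  using assms
proof (induction xs)
  case Nil
  then show ?case by simp
next
  case (Cons a xs)
  then have "sort_key f xs = sort_key g xs" by simp
  moreover have "insort_key f a (sort_key g xs) = insort_key g a (sort_key g xs)"
    using Cons.prems by (intro insort_key_cong) auto
  ultimately show ?case by simp
qed

lemma eventually_nhds_le_iff_stable:
  fixes f g :: "'a::t2_space \<Rightarrow> real"
  assumes "continuous (at w) f" and "continuous (at w) g" and "f w \<noteq> g w"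
  shows "eventually (\<lambda>x. (f x \<le> g x) = (f w \<le> g w)) (nhds w)"
proof -
  have lim: "((\<lambda>x. f x - g x) \<longlongrightarrow> f w - g w) (nhds w)"
    using assms(1,2) by (intro tendsto_intros) (simp_all add: continuous_at tendsto_nhds_iff)
  consider "f w - g w > 0" | "f w - g w < 0"
    using assms(3) by linarith
  then show ?thesis
  proof cases
    case 1
    from order_tendstoD(1)[OF lim 1] show ?thesis
      by eventually_elim (use 1 in auto)
  next
    case 2
    from order_tendstoD(2)[OF lim 2] show ?thesis
      by eventually_elim (use 2 in auto)
  qed
qed

lemma continuous_wdist: "continuous (at w) (\<lambda>w. wdist w a b)"
  unfolding wdist_def by (intro continuous_intros)

definition sq_dev_diff :: "real^'k \<Rightarrow> real^'k \<Rightarrow> real^'k \<Rightarrow> real^'k" where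
  "sq_dev_diff a c b = (\<chi> l. (a $ l - b $ l)^2 - (c $ l - b $ l)^2)"

lemma wdist_diff_eq_sq_dev_diff:
  "wdist w a b - wdist w c b = (\<Sum>l\<in>UNIV. sq_dev_diff a c b $ l * (w $ l)^2)"
  unfolding wdist_def sq_dev_diff_def by (simp add: sum_subtractf[symmetric] algebra_simps)

lemma abc_loss_eq:
  "abc_loss X theta sx sy N n k w = D_h_hat X (\<lambda>j. theta (abc_selected w sx sy N n ! j)) n k"
  unfolding abc_loss_def Y_w_def ..

lemma abc_selected_mem_lists:
  "abc_selected w sx sy N n \<in> {l. set l \<subseteq> {0..<N} \<and> length l \<le> n}"
  unfolding abc_selected_def by (auto dest: in_set_takeD)

lemma finite_range_abc_loss: "finite (range (abc_loss X theta sx sy N n k))"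
proof -
  let ?F = "\<lambda>l. D_h_hat X (\<lambda>j. theta (l ! j)) n k"
  have "range (abc_loss X theta sx sy N n k) \<subseteq> ?F ` {l. set l \<subseteq> {0..<N} \<and> length l \<le> n}"
    by (auto simp: abc_loss_eq intro: image_eqI[OF refl abc_selected_mem_lists])
  moreover have "finite {l. set l \<subseteq> {0..<N} \<and> length l \<le> n}"
    by (rule finite_lists_length_le) simp
  ultimately show ?thesis by (meson finite_imageI finite_subset)
qed

lemma eventually_abc_selected_eq:
  assumes "\<forall>i<N. \<forall>j<N. sq_dev_diff (sx i) (sx j) sy \<noteq> 0 \<longrightarrow>
             (\<Sum>l\<in>UNIV. sq_dev_diff (sx i) (sx j) sy $ l * (w $ l)^2) \<noteq> 0"
  shows "eventually (\<lambda>w'. abc_selected w' sx sy N n = abc_selected w sx sy N n) (nhds w)"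
proof -
  let ?d = "\<lambda>i w. wdist w (sx i) sy"
  have "eventually (\<lambda>w'. (?d i w' \<le> ?d j w') = (?d i w \<le> ?d j w)) (nhds w)"
    if "i < N" "j < N" for i j
  proof (cases "sq_dev_diff (sx i) (sx j) sy = 0")
    case True
    then have "?d i w' = ?d j w'" for w'
      using wdist_diff_eq_sq_dev_diff[of w' "sx i" sy "sx j"] by simp
    then show ?thesis by simp
  next
    case False
    with assms that have "?d i w \<noteq> ?d j w"
      using wdist_diff_eq_sq_dev_diff[of w "sx i" sy "sx j"] by auto
    then show ?thesis
      by (intro eventually_nhds_le_iff_stable continuous_wdist)
  qed
  then have "eventually (\<lambda>w'. \<forall>i\<in>{0..<N}. \<forall>j\<in>{0..<N}.
      (?d i w' \<le> ?d j w') = (?d i w \<le> ?d j w)) (nhds w)"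
    by (simp add: eventually_ball_finite)
  then show ?thesis
  proof eventually_elim
    case (elim w')
    then have "sort_key (\<lambda>i. ?d i w') [0..<N] = sort_key (\<lambda>i. ?d i w) [0..<N]"
      by (intro sort_key_cong) simp
    then show ?case unfolding abc_selected_def by simp
  qed
qed

theorem lemma4:
  fixes X theta :: "nat \<Rightarrow> real^'d"
    and sx :: "nat \<Rightarrow> real^'k" and sy :: "real^'k"
    and E :: "(real^'k) set"
    and N n k :: nat and alpha :: real
  assumes "0 < alpha" and "alpha < 1"
    and "n = nat \<lfloor>alpha * real N\<rfloor>"
    and "k \<ge> 2"
  shows "finite (abc_loss X theta sx sy N n k ` E) \<and>
    (\<exists>P :: (real^'k) set. finite P \<and> (\<forall>c\<in>P. c \<noteq> 0) \<and>
       (\<forall>w\<in>E. (\<forall>c\<in>P. (\<Sum>i\<in>UNIV. c $ i * (w $ i)^2) \<noteq> 0) \<longrightarrow>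
          (\<exists>e>0. \<forall>w'\<in>E. dist w' w < e \<longrightarrow>
              abc_loss X theta sx sy N n k w' = abc_loss X theta sx sy N n k w)))"
proof
  show "finite (abc_loss X theta sx sy N n k ` E)"
    using finite_range_abc_loss by (rule finite_subset[rotated]) auto
  define P where "P = {sq_dev_diff (sx i) (sx j) sy | i j. i < N \<and> j < N} - {0}"
  have "finite P"
    unfolding P_def by (intro finite_Diff finite_image_set2) simp_all
  moreover have "\<exists>e>0. \<forall>w'\<in>E. dist w' w < e \<longrightarrow>
      abc_loss X theta sx sy N n k w' = abc_loss X theta sx sy N n k w"
    if "\<forall>c\<in>P. (\<Sum>i\<in>UNIV. c $ i * (w $ i)^2) \<noteq> 0" for w
  proof -
    have "eventually (\<lambda>w'. abc_selected w' sx sy N n = abc_selected w sx sy N n) (nhds w)"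
      using that by (intro eventually_abc_selected_eq) (auto simp: P_def)
    then obtain e where "e > 0"
      and "\<And>w'. dist w' w < e \<Longrightarrow> abc_selected w' sx sy N n = abc_selected w sx sy N n"
      unfolding eventually_nhds_metric by blast
    then show ?thesis
      by (metis abc_loss_eq)
  qed
  ultimately show "\<exists>P :: (real^'k) set. finite P \<and> (\<forall>c\<in>P. c \<noteq> 0) \<and>
       (\<forall>w\<in>E. (\<forall>c\<in>P. (\<Sum>i\<in>UNIV. c $ i * (w $ i)^2) \<noteq> 0) \<longrightarrow>
          (\<exists>e>0. \<forall>w'\<in>E. dist w' w < e \<longrightarrow>
              abc_loss X theta sx sy N n k w' = abc_loss X theta sx sy N n k w))"
    by (intro exI[of _ P]) (simp add: P_def)
qed

end
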